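(* For a greedy policy and the stopping times $T_n:=\min\bigl(n,\inf\{k\ge1: S_{\mathbf G}(k+1)=\lceil n/2\rceil+1\ \text{or}\ R_{\mathbf G}(k+1)=\lceil n/2\rceil+1\}\bigr)$, $$\frac{R_{\mathbf G}(n)-R_{\mathbf G}(T_n)}{n-T_n}\xrightarrow{P}\frac12\quad(n\to\infty).$$
   Context: Let $(r_i)_{i\ge1}$, $(s_i)_{i\ge1}$ be probability vectors on the positive integers with $\mu:=\sum_i r_is_i>0$. Let $\{L_{\mathbf R}(n)\}_{n\ge1}$, $\{L_{\mathbf S}(n)\}_{n\ge1}$ be independent i.i.d. sequences with $\Pr(L_{\mathbf R}(1)=i)=r_i$, $\Pr(L_{\mathbf S}(1)=i)=s_i$. Put $X_{\mathbf R}(n)=s_{L_{\mathbf R}(n)}$, $X_{\mathbf S}(n)=r_{L_{\mathbf S}(n)}$ (common mean $\mu$, variances $\sigma_{\mathbf R}^2,\sigma_{\mathbf S}^2$; standing assumption $\sigma_{\mathbf R}+\sigma_{\mathbf S}>0$), and $\Gamma_{\mathbf R}[m]=\sum_{j=1}^mX_{\mathbf R}(j)$, $\Gamma_{\mathbf S}[m]=\sum_{j=1}^mX_{\mathbf S}(j)$. A reading policy is a $\{0,1\}$-valued process $C(n)$ ($C(n)=1$ iff the $n$-th record is read from $\mathbf R$), $R(n)=\sum_{j\le n}C(j)$, $S(n)=n-R(n)$, with $C(n)$ being $\mathcal F_{n-1}$-measurable where $\mathcal F_n=\mathcal F_0\vee\sigma(L_{\mathbf R}(1),\dots,L_{\mathbf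 R}(R(n));L_{\mathbf S}(1),\dots,L_{\mathbf S}(S(n)))$ and $\mathcal F_0$ (randomization) is independent of the labels. A greedy policy satisfies, for $n\ge1$, $C(n+1)=1$ if $\Gamma_{\mathbf S}[S(n)]>\Gamma_{\mathbf R}[R(n)]$ and $C(n+1)=0$ if $\Gamma_{\mathbf S}[S(n)]<\Gamma_{\mathbf R}[R(n)]$ (ties arbitrary); $R_{\mathbf G},S_{\mathbf G}$ denote its $R,S$. On the event $\{T_n=n\}$ the ratio in the claim is assigned any fixed value. *)

theory Defs
  imports "HOL-Probability.Probability"
begin

text \<open>Number of records read from R among the first n reads (C j = True iff read j is from R).\<close>
definition Rcnt :: "(nat \<Rightarrow> 'a \<Rightarrow> bool) \<Rightarrow> nat \<Rightarrow> 'a \<Rightarrow> nat" where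
  "Rcnt C n \<omega> = card {j \<in> {1..n}. C j \<omega>}"

definition Scnt :: "(nat \<Rightarrow> 'a \<Rightarrow> bool) \<Rightarrow> nat \<Rightarrow> 'a \<Rightarrow> nat" where
  "Scnt C n \<omega> = n - Rcnt C n \<omega>"

definition Gam :: "(nat \<Rightarrow> real) \<Rightarrow> (nat \<Rightarrow> 'a \<Rightarrow> nat) \<Rightarrow> nat \<Rightarrow> 'a \<Rightarrow> real" where
  "Gam w L m \<omega> = (\<Sum>j=1..m. w (L j \<omega>))"

definition rv_sets :: "'a measure \<Rightarrow> ('a \<Rightarrow> 'b) \<Rightarrow> 'a set set" where
  "rv_sets M X = {X -` A \<inter> space M | A. True}"

text \<open>Generator of F_n: F_0 together with the labels already read,
  L_R(1..R(n)) and L_S(1..S(n)); unread positions are observed as None.\<close>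
definition obs_gen :: "'a measure \<Rightarrow> 'a set set \<Rightarrow> (nat \<Rightarrow> 'a \<Rightarrow> nat) \<Rightarrow> (nat \<Rightarrow> 'a \<Rightarrow> nat)
    \<Rightarrow> (nat \<Rightarrow> 'a \<Rightarrow> bool) \<Rightarrow> nat \<Rightarrow> 'a set set" where
  "obs_gen M F0 LR LS C n =
     F0 \<union> (\<Union>j. rv_sets M (\<lambda>\<omega>. if j \<in> {1..Rcnt C n \<omega>} then Some (LR j \<omega>) else None))
        \<union> (\<Union>j. rv_sets M (\<lambda>\<omega>. if j \<in> {1..Scnt C n \<omega>} then Some (LS j \<omega>) else None))"

definition filt :: "'a measure \<Rightarrow> 'a set set \<Rightarrow> (nat \<Rightarrow> 'a \<Rightarrow> nat) \<Rightarrow> (nat \<Rightarrow> 'a \<Rightarrow> nat)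
    \<Rightarrow> (nat \<Rightarrow> 'a \<Rightarrow> bool) \<Rightarrow> nat \<Rightarrow> 'a set set" where
  "filt M F0 LR LS C n = sigma_sets (space M) (obs_gen M F0 LR LS C n)"

definition stopT :: "(nat \<Rightarrow> 'a \<Rightarrow> bool) \<Rightarrow> nat \<Rightarrow> 'a \<Rightarrow> nat" where
  "stopT C n \<omega> =
    (let h = nat \<lceil>real n / 2\<rceil> + 1;
         P = (\<lambda>k. 1 \<le> k \<and> (Scnt C (k+1) \<omega> = h \<or> Rcnt C (k+1) \<omega> = h))
     in if \<exists>k. P k then min n (LEAST k. P k) else n)"

end

theory Submission
  imports Defs "HOL-Real_Asymp.Real_Asymp"
begin

text \<open>The greedy rule keeps \<open>\<Gamma>\<^sub>S[S(k)] - \<Gamma>\<^sub>R[R(k)]\<close> in \<open>[-1, 1]\<close> for all \<open>k\<close>. Hence the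
  \<open>l\<^sub>R\<close> reads from R and \<open>l\<^sub>S\<close> reads from S made after \<open>T\<^sub>n\<close> have weighted sums that agree up
  to 2. If every window of at least \<open>n\<^bsup>1/3\<^esup>\<close> consecutive labels has empirical mean within
  \<open>\<epsilon>\<mu>\<close> of \<open>\<mu>\<close> (Hoeffding plus a union bound over \<open>O(n\<^sup>2)\<close> windows), this forces
  \<open>l\<^sub>R / (l\<^sub>R + l\<^sub>S) \<approx> 1/2\<close> as soon as \<open>n - T\<^sub>n \<ge> K n\<^bsup>1/3\<^esup>\<close>.
  Otherwise neither count exceeds \<open>\<lceil>n/2\<rceil>\<close> up to time \<open>k = n - K n\<^bsup>1/3\<^esup>\<close>, so both are
  \<open>k/2 + O(n\<^bsup>1/3\<^esup>)\<close> and \<open>\<Gamma>\<^sub>R[k/2] - \<Gamma>\<^sub>S[k/2] = O(n\<^bsup>1/3\<^esup>)\<close>. By the central limit theorem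
  for the i.i.d. centred increments \<open>s(L\<^sub>R(i)) - r(L\<^sub>S(i))\<close>, whose variance
  \<open>\<sigma>\<^sub>R\<^sup>2 + \<sigma>\<^sub>S\<^sup>2\<close> is positive, this has vanishing probability.\<close>

lemma Rcnt_0 [simp]: "Rcnt C 0 \<omega> = 0"
  by (simp add: Rcnt_def)

lemma Rcnt_Suc: "Rcnt C (Suc k) \<omega> = Rcnt C k \<omega> + (if C (Suc k) \<omega> then 1 else 0)"
proof -
  have "{j \<in> {1..Suc k}. C j \<omega>} = {j \<in> {1..k}. C j \<omega>} \<union> (if C (Suc k) \<omega> then {Suc k} else {})"
    by (auto simp: le_Suc_eq)
  then show ?thesis
    unfolding Rcnt_def by (simp add: card_insert_if)
qed

lemma Rcnt_le: "Rcnt C k \<omega> \<le> k"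
  by (induction k) (auto simp: Rcnt_Suc)

lemma Rcnt_mono: "k \<le> k' \<Longrightarrow> Rcnt C k \<omega> \<le> Rcnt C k' \<omega>"
  by (induction k' rule: dec_induct) (auto simp: Rcnt_Suc)

lemma Scnt_0 [simp]: "Scnt C 0 \<omega> = 0"
  by (simp add: Scnt_def)

lemma Scnt_Suc: "Scnt C (Suc k) \<omega> = Scnt C k \<omega> + (if C (Suc k) \<omega> then 0 else 1)"
  using Rcnt_le[of C k \<omega>] by (simp add: Scnt_def Rcnt_Suc)

lemma Scnt_mono: "k \<le> k' \<Longrightarrow> Scnt C k \<omega> \<le> Scnt C k' \<omega>"
  by (induction k' rule: dec_induct) (auto simp: Scnt_Suc)

lemma Rcnt_add_Scnt: "Rcnt C k \<omega> + Scnt C k \<omega> = k"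
  using Rcnt_le[of C k \<omega>] by (simp add: Scnt_def)

lemma Gam_0 [simp]: "Gam w L 0 \<omega> = 0"
  by (simp add: Gam_def)

lemma Gam_Suc: "Gam w L (Suc m) \<omega> = Gam w L m \<omega> + w (L (Suc m) \<omega>)"
  by (simp add: Gam_def)

lemma Gam_add_diff: "Gam w L (a + l) \<omega> - Gam w L a \<omega> = (\<Sum>j\<in>{a+1..a+l}. w (L j \<omega>))"
  by (induction l) (auto simp: Gam_Suc)

lemma Gam_diff_bounds:
  assumes w01: "\<And>i. 0 \<le> w i \<and> w i \<le> 1" and "a \<le> b"
  shows "0 \<le> Gam w L b \<omega> - Gam w L a \<omega> \<and> Gam w L b \<omega> - Gam w L a \<omega> \<le> real b - real a"
  using \<open>a \<le> b\<close>
proof (induction b rule: dec_induct)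
  case (step n)
  then show ?case
    using w01[of "L (Suc n) \<omega>"] by (auto simp: Gam_Suc)
qed simp

lemma Gam_dist_le:
  assumes "\<And>i. 0 \<le> w i \<and> w i \<le> 1"
  shows "\<bar>Gam w L a \<omega> - Gam w L b \<omega>\<bar> \<le> \<bar>real a - real b\<bar>"
  using Gam_diff_bounds[OF assms, where a = a and b = b and L = L and \<omega> = \<omega>]
    Gam_diff_bounds[OF assms, where a = b and b = a and L = L and \<omega> = \<omega>]
  by (cases "a \<le> b") (auto simp: abs_le_iff)

section \<open>The greedy balance and the stopping time\<close>

lemma greedy_balance_bound:
  assumes r01: "\<And>i. 0 \<le> r i \<and> r i \<le> 1" and s01: "\<And>i. 0 \<le> s i \<and> s i \<le> 1"
    and greedy: "\<And>n. n \<ge> 1 \<Longrightarrow>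
        (Gam r LS (Scnt C n \<omega>) \<omega> > Gam s LR (Rcnt C n \<omega>) \<omega> \<longrightarrow> C (Suc n) \<omega>) \<and>
        (Gam r LS (Scnt C n \<omega>) \<omega> < Gam s LR (Rcnt C n \<omega>) \<omega> \<longrightarrow> \<not> C (Suc n) \<omega>)"
  shows "\<bar>Gam r LS (Scnt C k \<omega>) \<omega> - Gam s LR (Rcnt C k \<omega>) \<omega>\<bar> \<le> 1"
proof -
  define D where "D k = Gam r LS (Scnt C k \<omega>) \<omega> - Gam s LR (Rcnt C k \<omega>) \<omega>" for k
  have "\<bar>D k\<bar> \<le> 1"
  proof (induction k)
    case (Suc k)
    have step: "D (Suc k) = (if C (Suc k) \<omega> then D k - s (LR (Suc (Rcnt C k \<omega>)) \<omega>)
                             else D k + r (LS (Suc (Scnt C k \<omega>)) \<omega>))"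
      by (simp add: D_def Scnt_Suc Rcnt_Suc Gam_Suc)
    txt \<open>The greedy rule reads from R only when \<open>D k \<ge> 0\<close> and from S only when
      \<open>D k \<le> 0\<close>, and each read moves \<open>D\<close> by at most 1 towards the other sign.\<close>
    have "0 \<le> D k" if "C (Suc k) \<omega>"
      using greedy[of k] that by (cases "k = 0") (force simp: D_def)+
    moreover have "D k \<le> 0" if "\<not> C (Suc k) \<omega>"
      using greedy[of k] that by (cases "k = 0") (force simp: D_def)+
    ultimately show ?case
      using Suc.IH step r01[of "LS (Suc (Scnt C k \<omega>)) \<omega>"] s01[of "LR (Suc (Rcnt C k \<omega>)) \<omega>"]
      by (auto simp: abs_le_iff split: if_splits)
  qed (simp add: D_def)
  then show ?thesis
    by (simp add: D_def)
qed

lemma stopT_le: "stopT C n \<omega> \<le> n"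
  by (simp add: stopT_def Let_def)

lemma stopT_le_hit:
  assumes "1 \<le> k"
    and "Scnt C (k+1) \<omega> = nat \<lceil>real n / 2\<rceil> + 1 \<or> Rcnt C (k+1) \<omega> = nat \<lceil>real n / 2\<rceil> + 1"
  shows "stopT C n \<omega> \<le> k"
proof -
  define P where "P k \<longleftrightarrow> 1 \<le> k \<and>
    (Scnt C (k+1) \<omega> = nat \<lceil>real n / 2\<rceil> + 1 \<or> Rcnt C (k+1) \<omega> = nat \<lceil>real n / 2\<rceil> + 1)" for k
  have "P k"
    using assms by (simp add: P_def)
  then have "stopT C n \<omega> = min n (LEAST k. P k)"
    unfolding stopT_def Let_def P_def by auto
  also have "\<dots> \<le> k"
    using Least_le[of P, OF \<open>P k\<close>] by linarith
  finally show ?thesis .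
qed

lemma nat_hits_of_step_le_one:
  fixes f :: "nat \<Rightarrow> nat"
  assumes "f 0 = 0" and step: "\<And>j. f (Suc j) \<le> f j + 1" and "h \<le> f m"
  shows "\<exists>j\<le>m. f j = h"
  using \<open>h \<le> f m\<close>
proof (induction m)
  case (Suc m)
  show ?case
  proof (cases "h \<le> f m")
    case False
    then have "f (Suc m) = h"
      using Suc.prems step[of m] by linarith
    then show ?thesis by blast
  qed (use Suc.IH le_Suc_eq in blast)
qed (use assms(1) in auto)

lemma counts_le_before_stopT:
  assumes "1 \<le> n" and k: "k \<le> stopT C n \<omega>"
  shows "Rcnt C k \<omega> \<le> nat \<lceil>real n / 2\<rceil> \<and> Scnt C k \<omega> \<le> nat \<lceil>real n / 2\<rceil>"
proof -
  define h where "h = nat \<lceil>real n / 2\<rceil> + 1"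
  have h2: "2 \<le> h"
    using \<open>1 \<le> n\<close> by (auto simp: h_def le_nat_iff one_le_ceiling)
  have bound: "f k < h"
    if f0: "f 0 = 0" and f1: "f 1 \<le> 1" and step: "\<And>j. f (Suc j) \<le> f j + 1"
      and hit: "\<And>j. 1 \<le> j \<Longrightarrow> f (j + 1) = h \<Longrightarrow> stopT C n \<omega> \<le> j" for f :: "nat \<Rightarrow> nat"
  proof (rule ccontr)
    assume "\<not> f k < h"
    then obtain j where j: "j \<le> k" "f j = h"
      using nat_hits_of_step_le_one[of f h k, OF f0 step] by auto
    have "j \<noteq> 0" "j \<noteq> 1"
      using j f0 f1 h2 by (metis not_numeral_le_zero, auto)
    then have "2 \<le> j"
      by arith
    then have "stopT C n \<omega> \<le> j - 1"
      using hit[of "j - 1"] j by simp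
    then show False
      using j k \<open>2 \<le> j\<close> by linarith
  qed
  have "Rcnt C k \<omega> < h"
  proof (rule bound)
    show "Rcnt C 1 \<omega> \<le> 1" by (rule Rcnt_le)
    show "Rcnt C (Suc j) \<omega> \<le> Rcnt C j \<omega> + 1" for j by (simp add: Rcnt_Suc)
    show "stopT C n \<omega> \<le> j" if "1 \<le> j" "Rcnt C (j + 1) \<omega> = h" for j
      using that by (intro stopT_le_hit) (auto simp: h_def)
  qed simp
  moreover have "Scnt C k \<omega> < h"
  proof (rule bound)
    show "Scnt C 1 \<omega> \<le> 1" by (simp add: Scnt_def)
    show "Scnt C (Suc j) \<omega> \<le> Scnt C j \<omega> + 1" for j by (simp add: Scnt_Suc)
    show "stopT C n \<omega> \<le> j" if "1 \<le> j" "Scnt C (j + 1) \<omega> = h" for j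
      using that by (intro stopT_le_hit) (auto simp: h_def)
  qed simp
  ultimately show ?thesis
    by (simp add: h_def)
qed

section \<open>Pathwise estimates on windows\<close>

definition windows_close ::
    "(nat \<Rightarrow> real) \<Rightarrow> (nat \<Rightarrow> 'a \<Rightarrow> nat) \<Rightarrow> real \<Rightarrow> real \<Rightarrow> nat \<Rightarrow> nat \<Rightarrow> 'a \<Rightarrow> bool" where
  "windows_close w L \<mu> \<epsilon> l0 n \<omega> \<longleftrightarrow>
     (\<forall>a\<le>n. \<forall>l. l0 \<le> l \<and> l \<le> n \<longrightarrow> \<bar>Gam w L (a + l) \<omega> - Gam w L a \<omega> - \<mu> * l\<bar> < \<epsilon> * l)"

lemma windows_close_increment:
  assumes w01: "\<And>i. 0 \<le> w i \<and> w i \<le> 1" and "0 \<le> \<mu>" "\<mu> \<le> 1" "0 \<le> \<epsilon>"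
    and close: "windows_close w L \<mu> \<epsilon> l0 n \<omega>" and "a \<le> n" "l \<le> n"
  shows "\<bar>Gam w L (a + l) \<omega> - Gam w L a \<omega> - \<mu> * l\<bar> \<le> \<epsilon> * l + l0"
proof (cases "l0 \<le> l")
  case True
  then show ?thesis
    using close \<open>a \<le> n\<close> \<open>l \<le> n\<close> unfolding windows_close_def by force
next
  case False
  have "0 \<le> Gam w L (a + l) \<omega> - Gam w L a \<omega> \<and> Gam w L (a + l) \<omega> - Gam w L a \<omega> \<le> real l"
    using Gam_diff_bounds[OF w01, of a "a + l"] by simp
  moreover have "0 \<le> \<mu> * l" "\<mu> * l \<le> l" "0 \<le> \<epsilon> * l"
    using assms(2-4) by (auto simp: mult_left_le_one_le)
  ultimately show ?thesis
    using False by (simp add: abs_le_iff)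
qed

text \<open>Between \<open>T\<close> and \<open>n\<close> the policy reads \<open>l\<^sub>R\<close> records from R and \<open>l\<^sub>S\<close> from S;
  the balance at times \<open>T\<close> and \<open>n\<close> makes the two weighted sums of these reads differ by at
  most 2, and close windows turn them into \<open>\<mu> l\<^sub>R\<close> and \<open>\<mu> l\<^sub>S\<close>.\<close>

lemma ratio_deviation_le:
  assumes r01: "\<And>i. 0 \<le> r i \<and> r i \<le> 1" and s01: "\<And>i. 0 \<le> s i \<and> s i \<le> 1"
    and "0 < \<mu>" "\<mu> \<le> 1" "0 \<le> \<epsilon>"
    and balance: "\<And>k. \<bar>Gam r LS (Scnt C k \<omega>) \<omega> - Gam s LR (Rcnt C k \<omega>) \<omega>\<bar> \<le> 1"
    and closeR: "windows_close s LR \<mu> \<epsilon> l0 n \<omega>" and closeS: "windows_close r LS \<mu> \<epsilon> l0 n \<omega>"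
    and "T < n"
  shows "\<bar>(real (Rcnt C n \<omega>) - real (Rcnt C T \<omega>)) / (real n - real T) - 1/2\<bar>
           \<le> (2 + \<epsilon> * (real n - real T) + 2 * l0) / (2 * \<mu> * (real n - real T))"
proof -
  define a where "a = Rcnt C T \<omega>"
  define lR where "lR = Rcnt C n \<omega> - Rcnt C T \<omega>"
  define b where "b = Scnt C T \<omega>"
  define lS where "lS = Scnt C n \<omega> - Scnt C T \<omega>"
  have Rm: "Rcnt C T \<omega> \<le> Rcnt C n \<omega>" and Sm: "Scnt C T \<omega> \<le> Scnt C n \<omega>"
    using \<open>T < n\<close> by (auto intro: Rcnt_mono Scnt_mono)
  have aR: "a + lR = Rcnt C n \<omega>" and bS: "b + lS = Scnt C n \<omega>"
    using Rm Sm by (simp_all add: a_def lR_def b_def lS_def)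
  have lRS: "real lR + real lS = real n - real T"
    using Rcnt_add_Scnt[of C n \<omega>] Rcnt_add_Scnt[of C T \<omega>] Rm Sm \<open>T < n\<close>
    unfolding lR_def lS_def by linarith
  have "a \<le> n" "lR \<le> n" "b \<le> n" "lS \<le> n"
    using Rcnt_le[of C n \<omega>] Rcnt_le[of C T \<omega>] Scnt_def[of C n \<omega>] Scnt_def[of C T \<omega>] \<open>T < n\<close>
    unfolding a_def lR_def b_def lS_def by auto
  then have wR: "\<bar>Gam s LR (a + lR) \<omega> - Gam s LR a \<omega> - \<mu> * lR\<bar> \<le> \<epsilon> * lR + l0"
    and wS: "\<bar>Gam r LS (b + lS) \<omega> - Gam r LS b \<omega> - \<mu> * lS\<bar> \<le> \<epsilon> * lS + l0"
    using assms(3-5) by (auto intro!: windows_close_increment r01 s01 closeR closeS)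
  have "\<bar>Gam r LS (b + lS) \<omega> - Gam s LR (a + lR) \<omega>\<bar> \<le> 1"
    and "\<bar>Gam r LS b \<omega> - Gam s LR a \<omega>\<bar> \<le> 1"
    using balance[of n] balance[of T] aR bS by (simp_all add: a_def b_def)
  have "\<mu> * \<bar>real lR - real lS\<bar> = \<bar>\<mu> * lR - \<mu> * lS\<bar>"
    using \<open>0 < \<mu>\<close> by (subst right_diff_distrib[symmetric]) (simp add: abs_mult)
  also have "\<dots> \<le> 2 + \<epsilon> * lR + \<epsilon> * lS + 2 * l0"
    using wR wS \<open>\<bar>Gam r LS (b + lS) \<omega> - Gam s LR (a + lR) \<omega>\<bar> \<le> 1\<close>
      \<open>\<bar>Gam r LS b \<omega> - Gam s LR a \<omega>\<bar> \<le> 1\<close> by (simp add: abs_le_iff)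
  also have "\<dots> = 2 + \<epsilon> * (real n - real T) + 2 * l0"
    using lRS by (simp add: distrib_left[symmetric])
  finally have key: "\<mu> * \<bar>real lR - real lS\<bar> \<le> 2 + \<epsilon> * (real n - real T) + 2 * l0" .
  have m: "0 < real n - real T"
    using \<open>T < n\<close> by simp
  have "(real (Rcnt C n \<omega>) - real (Rcnt C T \<omega>)) / (real n - real T) - 1/2
        = (real lR - real lS) / (2 * (real n - real T))"
    using lRS m Rm unfolding lR_def by (simp add: field_simps of_nat_diff)
  then have "\<bar>(real (Rcnt C n \<omega>) - real (Rcnt C T \<omega>)) / (real n - real T) - 1/2\<bar>
        = (\<mu> * \<bar>real lR - real lS\<bar>) / (2 * \<mu> * (real n - real T))"
    using m \<open>0 < \<mu>\<close> by simp
  also have "\<dots> \<le> (2 + \<epsilon> * (real n - real T) + 2 * l0) / (2 * \<mu> * (real n - real T))"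
    using key m \<open>0 < \<mu>\<close> by (intro divide_right_mono) auto
  finally show ?thesis .
qed

lemma ratio_deviation_less:
  fixes K :: real
  assumes r01: "\<And>i. 0 \<le> r i \<and> r i \<le> 1" and s01: "\<And>i. 0 \<le> s i \<and> s i \<le> 1"
    and "0 < \<mu>" "\<mu> \<le> 1" "0 < \<epsilon>"
    and balance: "\<And>k. \<bar>Gam r LS (Scnt C k \<omega>) \<omega> - Gam s LR (Rcnt C k \<omega>) \<omega>\<bar> \<le> 1"
    and closeR: "windows_close s LR \<mu> (\<mu> * \<epsilon>) l0 n \<omega>"
    and closeS: "windows_close r LS \<mu> (\<mu> * \<epsilon>) l0 n \<omega>"
    and "1 \<le> l0" and K: "4 < \<mu> * \<epsilon> * K" and long: "K * l0 < real n - real T"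
  shows "\<bar>(real (Rcnt C n \<omega>) - real (Rcnt C T \<omega>)) / (real n - real T) - 1/2\<bar> < \<epsilon>"
proof -
  define m where "m = real n - real T"
  have "0 < \<mu> * \<epsilon>"
    using \<open>0 < \<mu>\<close> \<open>0 < \<epsilon>\<close> by simp
  have "0 < K"
  proof (rule ccontr)
    assume "\<not> 0 < K"
    then have "\<mu> * \<epsilon> * K \<le> 0"
      using \<open>0 < \<mu> * \<epsilon>\<close> by (simp add: mult_nonneg_nonpos)
    then show False
      using K by simp
  qed
  then have "0 < m"
    using long unfolding m_def by (smt (verit) of_nat_0_le_iff zero_le_mult_iff)
  then have "T < n"
    by (simp add: m_def)
  have "4 * real l0 \<le> \<mu> * \<epsilon> * K * real l0"
    using K by (intro mult_right_mono) auto
  also have "\<dots> = (\<mu> * \<epsilon>) * (K * l0)"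
    by (simp add: mult.assoc)
  also have "\<dots> < (\<mu> * \<epsilon>) * m"
    using long \<open>0 < \<mu> * \<epsilon>\<close> unfolding m_def by (rule mult_strict_left_mono)
  finally have "2 + 2 * real l0 < \<mu> * \<epsilon> * m"
    using \<open>1 \<le> l0\<close> by linarith
  then have "(2 + \<mu> * \<epsilon> * m + 2 * l0) / (2 * \<mu> * m) < \<epsilon>"
    using \<open>0 < m\<close> \<open>0 < \<mu>\<close> by (subst pos_divide_less_eq) (auto simp: ac_simps)
  moreover have "\<bar>(real (Rcnt C n \<omega>) - real (Rcnt C T \<omega>)) / m - 1/2\<bar>
                   \<le> (2 + \<mu> * \<epsilon> * m + 2 * l0) / (2 * \<mu> * m)"
    unfolding m_def using assms(3-5) \<open>T < n\<close>
    by (intro ratio_deviation_le[OF r01 s01 _ _ _ balance closeR closeS]) auto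
  ultimately show ?thesis
    by (simp add: m_def)
qed

text \<open>Before \<open>T\<^sub>n\<close> neither count exceeds \<open>\<lceil>n/2\<rceil>\<close>, so at time \<open>k\<close> both are within
  \<open>(n - k)/2 + 2\<close> of \<open>k/2\<close>; the balance at time \<open>k\<close> then transfers to the prefixes of
  common length \<open>k div 2\<close>.\<close>

lemma imbalance_le_before_stopT:
  assumes r01: "\<And>i. 0 \<le> r i \<and> r i \<le> 1" and s01: "\<And>i. 0 \<le> s i \<and> s i \<le> 1"
    and balance: "\<bar>Gam r LS (Scnt C k \<omega>) \<omega> - Gam s LR (Rcnt C k \<omega>) \<omega>\<bar> \<le> 1"
    and "1 \<le> n" and k: "k \<le> stopT C n \<omega>"
  shows "\<bar>Gam s LR (k div 2) \<omega> - Gam r LS (k div 2) \<omega>\<bar> \<le> real n - real k + 5"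
proof -
  define q where "q = k div 2"
  define R where "R = Rcnt C k \<omega>"
  have "k \<le> n"
    using k stopT_le[of C n \<omega>] by linarith
  have "R \<le> k"
    unfolding R_def by (rule Rcnt_le)
  moreover have "real R \<le> real n / 2 + 1" "real k - real R \<le> real n / 2 + 1"
    using counts_le_before_stopT[OF \<open>1 \<le> n\<close> k] \<open>R \<le> k\<close>
    unfolding R_def Scnt_def by (auto simp: of_nat_diff) linarith+
  moreover have "2 * real q \<le> real k" "real k \<le> 2 * real q + 1"
    unfolding q_def by linarith+
  ultimately have Rq: "\<bar>real R - real q\<bar> \<le> real n / 2 - real k / 2 + 3 / 2"
    unfolding abs_le_iff by (intro conjI) linarith+
  have "\<bar>Gam s LR R \<omega> - Gam s LR q \<omega>\<bar> \<le> \<bar>real R - real q\<bar>"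
    by (rule Gam_dist_le[OF s01])
  moreover have "\<bar>Gam r LS (k - R) \<omega> - Gam r LS (k - q) \<omega>\<bar> \<le> \<bar>real (k - R) - real (k - q)\<bar>"
    by (rule Gam_dist_le[OF r01])
  moreover have "\<bar>real (k - R) - real (k - q)\<bar> = \<bar>real R - real q\<bar>"
    using \<open>R \<le> k\<close> \<open>2 * real q \<le> real k\<close> by (simp add: of_nat_diff abs_minus_commute)
  moreover have "\<bar>Gam r LS (k - q) \<omega> - Gam r LS q \<omega>\<bar> \<le> \<bar>real (k - q) - real q\<bar>"
    by (rule Gam_dist_le[OF r01])
  moreover have "\<bar>real (k - q) - real q\<bar> \<le> 1"
    using \<open>real k \<le> 2 * real q + 1\<close> \<open>2 * real q \<le> real k\<close> by (simp add: of_nat_diff)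
  moreover have "\<bar>Gam r LS (k - R) \<omega> - Gam s LR R \<omega>\<bar> \<le> 1"
    using balance unfolding R_def Scnt_def .
  ultimately show ?thesis
    using Rq unfolding q_def[symmetric] unfolding abs_le_iff by (intro conjI) linarith+
qed

section \<open>Probabilistic tools\<close>

lemma nonneg_sums_term_le:
  fixes f :: "nat \<Rightarrow> real"
  assumes "\<And>i. 0 \<le> f i" and "f sums a"
  shows "f i \<le> a"
proof -
  have "sum f {i} \<le> suminf f"
    using assms by (intro sum_le_suminf) (auto simp: sums_iff)
  then show ?thesis
    using \<open>f sums a\<close> by (simp add: sums_iff)
qed

lemma (in prob_space) expectation_nat_valued:
  fixes X :: "'a \<Rightarrow> nat" and f p :: "nat \<Rightarrow> real"
  assumes X: "X \<in> measurable M (count_space UNIV)"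
    and p: "\<And>i. prob {\<omega> \<in> space M. X \<omega> = i} = p i"
    and f: "\<And>i. 0 \<le> f i" and pf: "summable (\<lambda>i. p i * f i)"
  shows "expectation (\<lambda>\<omega>. f (X \<omega>)) = (\<Sum>i. p i * f i)"
proof -
  have meas: "{\<omega> \<in> space M. X \<omega> = i} \<in> sets M" for i
    using X by measurable
  have p0: "0 \<le> p i" for i
    using p[of i] by (metis measure_nonneg)
  have "ennreal (f (X \<omega>)) = (\<Sum>i. ennreal (f i) * indicator {\<omega> \<in> space M. X \<omega> = i} \<omega>)"
    if "\<omega> \<in> space M" for \<omega>
  proof -
    have "(\<lambda>i. ennreal (f i) * indicator {\<omega> \<in> space M. X \<omega> = i} \<omega>)
        = (\<lambda>i. if i = X \<omega> then ennreal (f i) else 0)"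
      using that by (auto simp: indicator_def)
    then show ?thesis
      using sums_unique[OF sums_single[of "X \<omega>" "\<lambda>i. ennreal (f i)"]] by simp
  qed
  then have "(\<integral>\<^sup>+\<omega>. ennreal (f (X \<omega>)) \<partial>M)
      = (\<integral>\<^sup>+\<omega>. (\<Sum>i. ennreal (f i) * indicator {\<omega> \<in> space M. X \<omega> = i} \<omega>) \<partial>M)"
    by (intro nn_integral_cong) auto
  also have "\<dots> = (\<Sum>i. \<integral>\<^sup>+\<omega>. ennreal (f i) * indicator {\<omega> \<in> space M. X \<omega> = i} \<omega> \<partial>M)"
    using meas by (intro nn_integral_suminf) auto
  also have "\<dots> = (\<Sum>i. ennreal (p i * f i))"
    using meas p p0 f
    by (simp add: nn_integral_cmult_indicator emeasure_eq_measure ennreal_mult' mult.commute)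
  also have "\<dots> = ennreal (\<Sum>i. p i * f i)"
    using p0 f pf by (intro suminf_ennreal2) auto
  finally have "(\<integral>\<^sup>+\<omega>. ennreal (f (X \<omega>)) \<partial>M) = ennreal (\<Sum>i. p i * f i)" .
  moreover have "expectation (\<lambda>\<omega>. f (X \<omega>)) = enn2real (\<integral>\<^sup>+\<omega>. ennreal (f (X \<omega>)) \<partial>M)"
    using f X by (intro enn2real_nn_integral_eq_integral[symmetric]) auto
  ultimately show ?thesis
    using p0 f pf by (simp add: suminf_nonneg)
qed

lemma (in prob_space) distr_eq_countable_valued:
  fixes X Y :: "'a \<Rightarrow> 'b::countable"
  assumes X: "X \<in> measurable M (count_space UNIV)" and Y: "Y \<in> measurable M (count_space UNIV)"
    and eq: "\<And>i. prob {\<omega> \<in> space M. X \<omega> = i} = prob {\<omega> \<in> space M. Y \<omega> = i}"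
  shows "distr M (count_space UNIV) X = distr M (count_space UNIV) Y"
proof (rule measure_eqI_countable)
  fix a :: 'b
  have "emeasure (distr M (count_space UNIV) Z) {a} = prob {\<omega> \<in> space M. Z \<omega> = a}"
    if "Z \<in> measurable M (count_space UNIV)" for Z :: "'a \<Rightarrow> 'b"
  proof -
    have "emeasure (distr M (count_space UNIV) Z) {a} = emeasure M (Z -` {a} \<inter> space M)"
      using that by (intro emeasure_distr) auto
    also have "Z -` {a} \<inter> space M = {\<omega> \<in> space M. Z \<omega> = a}"
      by auto
    finally show ?thesis
      using that by (simp add: emeasure_eq_measure)
  qed
  then show "emeasure (distr M (count_space UNIV) X) {a} = emeasure (distr M (count_space UNIV) Y) {a}"
    using X Y eq by simp
qed auto

lemma (in prob_space) indep_sets_reindex: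
  assumes ind: "indep_sets F (g ` I)" and inj: "inj_on g I"
  shows "indep_sets (\<lambda>i. F (g i)) I"
  unfolding indep_sets_def
proof (intro conjI ballI allI impI)
  fix i assume "i \<in> I"
  then show "F (g i) \<subseteq> events"
    using ind by (auto simp: indep_sets_def)
next
  fix J A assume J: "J \<subseteq> I" "J \<noteq> {}" "finite J" and A: "A \<in> Pi J (\<lambda>i. F (g i))"
  define A' where "A' = (\<lambda>y. A (the_inv_into J g y))"
  have injJ: "inj_on g J"
    using inj J by (metis inj_on_subset)
  have A'g: "A' (g j) = A j" if "j \<in> J" for j
    using injJ that unfolding A'_def by (simp add: the_inv_into_f_f)
  have "A' \<in> Pi (g ` J) F"
    using A A'g by auto
  then have "prob (\<Inter>y\<in>g ` J. A' y) = (\<Prod>y\<in>g ` J. prob (A' y))"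
    using ind J unfolding indep_sets_def by (metis finite_imageI image_is_empty image_mono)
  moreover have "(\<Inter>y\<in>g ` J. A' y) = (\<Inter>j\<in>J. A j)"
    using A'g by auto
  moreover have "(\<Prod>y\<in>g ` J. prob (A' y)) = (\<Prod>j\<in>J. prob (A j))"
    using injJ A'g by (simp add: prod.reindex)
  ultimately show "prob (\<Inter>j\<in>J. A j) = (\<Prod>j\<in>J. prob (A j))"
    by simp
qed

lemma (in prob_space) indep_vars_reindex:
  assumes "indep_vars M' X (g ` I)" and inj: "inj_on g I"
  shows "indep_vars (\<lambda>i. M' (g i)) (\<lambda>i. X (g i)) I"
  using assms(1) unfolding indep_vars_def2 by (auto intro!: indep_sets_reindex[OF _ inj])

lemma (in prob_space) variance_diff_indep:
  fixes X Y :: "'a \<Rightarrow> real"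
  assumes ind: "indep_var borel X borel Y"
    and [simp]: "integrable M X" "integrable M Y"
    and [simp]: "integrable M (\<lambda>\<omega>. (X \<omega>)\<^sup>2)" "integrable M (\<lambda>\<omega>. (Y \<omega>)\<^sup>2)"
  shows "variance (\<lambda>\<omega>. X \<omega> - Y \<omega>) = variance X + variance Y"
proof -
  have [simp]: "integrable M (\<lambda>\<omega>. X \<omega> * Y \<omega>)"
    using ind by (rule indep_var_integrable) simp_all
  have EXY: "expectation (\<lambda>\<omega>. X \<omega> * Y \<omega>) = expectation X * expectation Y"
    using ind by (rule indep_var_lebesgue_integral) simp_all
  have sq: "(\<lambda>\<omega>. (X \<omega> - Y \<omega>)\<^sup>2) = (\<lambda>\<omega>. (X \<omega>)\<^sup>2 + (Y \<omega>)\<^sup>2 - 2 * (X \<omega> * Y \<omega>))"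
    by (simp add: fun_eq_iff power2_diff)
  have "variance (\<lambda>\<omega>. X \<omega> - Y \<omega>)
      = expectation (\<lambda>\<omega>. (X \<omega> - Y \<omega>)\<^sup>2) - (expectation (\<lambda>\<omega>. X \<omega> - Y \<omega>))\<^sup>2"
    by (rule variance_eq) (simp_all add: sq)
  also have "\<dots> = (expectation (\<lambda>\<omega>. (X \<omega>)\<^sup>2) - (expectation X)\<^sup>2)
                  + (expectation (\<lambda>\<omega>. (Y \<omega>)\<^sup>2) - (expectation Y)\<^sup>2)"
    unfolding sq using EXY by (simp add: power2_diff)
  also have "\<dots> = variance X + variance Y"
    by (simp add: variance_eq)
  finally show ?thesis .
qed

lemma borel_measurable_Gam:
  assumes "\<And>j. 1 \<le> j \<Longrightarrow> L j \<in> measurable M (count_space UNIV)"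
  shows "(\<lambda>\<omega>. Gam w L m \<omega>) \<in> borel_measurable M"
  unfolding Gam_def
proof (intro borel_measurable_sum)
  fix j assume "j \<in> {1..m}"
  then have "L j \<in> measurable M (count_space UNIV)"
    using assms by auto
  then show "(\<lambda>\<omega>. w (L j \<omega>)) \<in> borel_measurable M"
    by (rule measurable_compose) auto
qed

lemma not_windows_close_eq_Union:
  "{\<omega> \<in> space M. \<not> windows_close w L \<mu> \<epsilon> l0 n \<omega>}
     = (\<Union>(a, l)\<in>{..n} \<times> {l0..n}.
          {\<omega> \<in> space M. \<epsilon> * l \<le> \<bar>Gam w L (a + l) \<omega> - Gam w L a \<omega> - \<mu> * l\<bar>})"
  unfolding windows_close_def by (auto simp: not_less; meson atLeastAtMost_iff atMost_iff)

lemma sets_not_windows_close: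
  assumes "\<And>j. 1 \<le> j \<Longrightarrow> L j \<in> measurable M (count_space UNIV)"
  shows "{\<omega> \<in> space M. \<not> windows_close w L \<mu> \<epsilon> l0 n \<omega>} \<in> sets M"
proof -
  have [measurable]: "(\<lambda>\<omega>. Gam w L m \<omega>) \<in> borel_measurable M" for m
    using assms by (rule borel_measurable_Gam)
  have "{\<omega> \<in> space M. \<epsilon> * l \<le> \<bar>Gam w L (a + l) \<omega> - Gam w L a \<omega> - \<mu> * l\<bar>} \<in> sets M" for a l
    by measurable
  then show ?thesis
    unfolding not_windows_close_eq_Union by (auto intro!: sets.finite_UN split: prod.split)
qed

context prob_space
begin

lemma prob_window_deviation_le:
  fixes w :: "nat \<Rightarrow> real" and L :: "nat \<Rightarrow> 'a \<Rightarrow> nat"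
  assumes ind: "indep_vars (\<lambda>_. borel) (\<lambda>j \<omega>. w (L j \<omega>)) {1..}"
    and E: "\<And>j. 1 \<le> j \<Longrightarrow> expectation (\<lambda>\<omega>. w (L j \<omega>)) = \<mu>"
    and w01: "\<And>i. 0 \<le> w i \<and> w i \<le> 1" and "1 \<le> l" "0 \<le> \<epsilon>"
  shows "prob {\<omega> \<in> space M. \<epsilon> * l \<le> \<bar>Gam w L (a + l) \<omega> - Gam w L a \<omega> - \<mu> * l\<bar>}
           \<le> 2 * exp (- 2 * \<epsilon>\<^sup>2 * l)"
proof -
  define I where "I = {a+1..a+l}"
  define X where "X = (\<lambda>j \<omega>. w (L j \<omega>))"
  have "I \<subseteq> {1..}" "card I = l"
    unfolding I_def by auto
  interpret H: Hoeffding_ineq M I X "\<lambda>_. 0" "\<lambda>_. 1" "\<Sum>i\<in>I. expectation (X i)"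
  proof unfold_locales
    show "finite I"
      unfolding I_def by simp
    show "indep_vars (\<lambda>_. borel) X I"
      unfolding X_def using ind \<open>I \<subseteq> {1..}\<close> by (rule indep_vars_subset)
    show "AE x in M. X i x \<in> {0..1}" if "i \<in> I" for i
      using w01 unfolding X_def by auto
  qed simp
  have muI: "(\<Sum>i\<in>I. expectation (X i)) = real l * \<mu>"
    using \<open>I \<subseteq> {1..}\<close> E \<open>card I = l\<close> unfolding X_def by (subst sum.cong[OF refl, of _ _ "\<lambda>_. \<mu>"]) auto
  have sq: "(\<Sum>i\<in>I. ((1::real) - 0)\<^sup>2) = real l"
    using \<open>card I = l\<close> by simp
  have "prob {x\<in>space M. \<bar>(\<Sum>i\<in>I. X i x) - (\<Sum>i\<in>I. expectation (X i))\<bar> \<ge> \<epsilon> * l}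
        \<le> 2 * exp (-2 * (\<epsilon> * l)\<^sup>2 / (\<Sum>i\<in>I. ((1::real) - 0)\<^sup>2))"
    using assms(4,5) sq by (intro H.Hoeffding_ineq_abs_ge) auto
  also have "-2 * (\<epsilon> * l)\<^sup>2 / (\<Sum>i\<in>I. ((1::real) - 0)\<^sup>2) = -2 * \<epsilon>\<^sup>2 * l"
    using sq \<open>1 \<le> l\<close> by (simp add: power2_eq_square)
  also have "{x\<in>space M. \<bar>(\<Sum>i\<in>I. X i x) - (\<Sum>i\<in>I. expectation (X i))\<bar> \<ge> \<epsilon> * l}
       = {\<omega> \<in> space M. \<epsilon> * l \<le> \<bar>Gam w L (a + l) \<omega> - Gam w L a \<omega> - \<mu> * l\<bar>}"
    using muI unfolding X_def I_def Gam_add_diff by (simp add: mult.commute)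
  finally show ?thesis .
qed

lemma prob_not_windows_close_le:
  fixes w :: "nat \<Rightarrow> real" and L :: "nat \<Rightarrow> 'a \<Rightarrow> nat"
  assumes meas: "\<And>j. 1 \<le> j \<Longrightarrow> L j \<in> measurable M (count_space UNIV)"
    and ind: "indep_vars (\<lambda>_. borel) (\<lambda>j \<omega>. w (L j \<omega>)) {1..}"
    and E: "\<And>j. 1 \<le> j \<Longrightarrow> expectation (\<lambda>\<omega>. w (L j \<omega>)) = \<mu>"
    and w01: "\<And>i. 0 \<le> w i \<and> w i \<le> 1" and "1 \<le> l0" "0 \<le> \<epsilon>"
  shows "prob {\<omega> \<in> space M. \<not> windows_close w L \<mu> \<epsilon> l0 n \<omega>}
           \<le> (real n + 1)\<^sup>2 * (2 * exp (- 2 * \<epsilon>\<^sup>2 * l0))"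
proof -
  define K where "K = {..n} \<times> {l0..n}"
  define A where "A = (\<lambda>(a, l). {\<omega> \<in> space M. \<epsilon> * l \<le> \<bar>Gam w L (a + l) \<omega> - Gam w L a \<omega> - \<mu> * l\<bar>})"
  have [measurable]: "(\<lambda>\<omega>. Gam w L m \<omega>) \<in> borel_measurable M" for m
    using meas by (rule borel_measurable_Gam)
  have "A k \<in> sets M" for k
    unfolding A_def by (cases k) simp
  then have "prob (\<Union>k\<in>K. A k) \<le> (\<Sum>k\<in>K. prob (A k))"
    unfolding K_def by (intro measure_UNION_le) auto
  also have "\<dots> \<le> (\<Sum>k\<in>K. 2 * exp (- 2 * \<epsilon>\<^sup>2 * l0))"
  proof (intro sum_mono)
    fix k assume "k \<in> K"
    then obtain a l where k: "k = (a, l)" "l0 \<le> l"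
      unfolding K_def by auto
    have "prob (A k) \<le> 2 * exp (- 2 * \<epsilon>\<^sup>2 * l)"
      unfolding A_def k prod.case using k assms(5,6)
      by (intro prob_window_deviation_le[OF ind E w01]) auto
    also have "\<dots> \<le> 2 * exp (- 2 * \<epsilon>\<^sup>2 * l0)"
      using k(2) by (simp add: mult_left_mono)
    finally show "prob (A k) \<le> 2 * exp (- 2 * \<epsilon>\<^sup>2 * l0)" .
  qed
  also have "\<dots> = real (card K) * (2 * exp (- 2 * \<epsilon>\<^sup>2 * l0))"
    by simp
  also have "\<dots> \<le> (real n + 1)\<^sup>2 * (2 * exp (- 2 * \<epsilon>\<^sup>2 * l0))"
  proof (intro mult_right_mono)
    have "card K \<le> (n + 1) * (n + 1)"
      unfolding K_def card_cartesian_product by (intro mult_le_mono) simp_all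
    then have "real (card K) \<le> (real n + 1) * (real n + 1)"
      by (metis of_nat_Suc of_nat_le_iff of_nat_mult Suc_eq_plus1 add.commute)
    then show "real (card K) \<le> (real n + 1)\<^sup>2"
      by (simp add: power2_eq_square)
  qed auto
  finally show ?thesis
    unfolding not_windows_close_eq_Union A_def K_def by simp
qed

end

lemma isCont_cdf_std_normal: "isCont (cdf std_normal_distribution) x"
proof -
  interpret N: real_distribution std_normal_distribution
    by (rule real_dist_normal_dist)
  have "emeasure std_normal_distribution {x} = 0"
    by (subst emeasure_density) (auto intro!: nn_integral_null_set)
  then show ?thesis
    using N.isCont_cdf by (simp add: measure_def)
qed

locale reading_model = prob_space M for M :: "'a measure" +
  fixes r s :: "nat \<Rightarrow> real" and LR LS :: "nat \<Rightarrow> 'a \<Rightarrow> nat" and F0 :: "'a set set"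
  assumes r_nonneg: "\<And>i. r i \<ge> 0" and r_sum: "r sums 1"
    and s_nonneg: "\<And>i. s i \<ge> 0" and s_sum: "s sums 1"
    and mean_pos: "(\<Sum>i. r i * s i) > 0"
    and LR_meas: "\<And>j. j \<ge> 1 \<Longrightarrow> LR j \<in> measurable M (count_space UNIV)"
    and LS_meas: "\<And>j. j \<ge> 1 \<Longrightarrow> LS j \<in> measurable M (count_space UNIV)"
    and LR_dist: "\<And>j i. j \<ge> 1 \<Longrightarrow> measure M {\<omega> \<in> space M. LR j \<omega> = i} = r i"
    and LS_dist: "\<And>j i. j \<ge> 1 \<Longrightarrow> measure M {\<omega> \<in> space M. LS j \<omega> = i} = s i"
    and indep: "indep_sets
        (\<lambda>i. case i of None \<Rightarrow> F0
                     | Some (True, j) \<Rightarrow> rv_sets M (LR j)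
                     | Some (False, j) \<Rightarrow> rv_sets M (LS j))
        ({None} \<union> Some ` (UNIV \<times> {1..}))"
    and sigma_pos: "sqrt (variance (\<lambda>\<omega>. s (LR 1 \<omega>)))
                    + sqrt (variance (\<lambda>\<omega>. r (LS 1 \<omega>))) > 0"
begin

definition mu :: real where
  "mu = (\<Sum>i. r i * s i)"

lemma r01: "0 \<le> r i \<and> r i \<le> 1"
  using r_nonneg nonneg_sums_term_le[OF r_nonneg r_sum] by auto

lemma s01: "0 \<le> s i \<and> s i \<le> 1"
  using s_nonneg nonneg_sums_term_le[OF s_nonneg s_sum] by auto

lemma summable_rs: "summable (\<lambda>i. r i * s i)"
proof (rule summable_comparison_test'[where g = r])
  show "summable r"
    using r_sum by (simp add: sums_iff)
  show "norm (r n * s n) \<le> r n" for n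
    using r01[of n] s01[of n] mult_left_le[of "s n" "r n"] by simp
qed

lemma mu_pos: "0 < mu"
  using mean_pos by (simp add: mu_def)

lemma mu_le_1: "mu \<le> 1"
proof -
  have "mu \<le> suminf r"
    unfolding mu_def using r01 s01 summable_rs r_sum mult_left_le
    by (intro suminf_le) (auto simp: sums_iff)
  then show ?thesis
    using r_sum by (simp add: sums_iff)
qed

lemma LR_Suc_measurable [measurable]: "LR (Suc j) \<in> measurable M (count_space UNIV)"
  using LR_meas by simp

lemma LS_Suc_measurable [measurable]: "LS (Suc j) \<in> measurable M (count_space UNIV)"
  using LS_meas by simp

lemma Gam_s_LR_measurable [measurable]: "(\<lambda>\<omega>. Gam s LR m \<omega>) \<in> borel_measurable M"
  using LR_meas by (rule borel_measurable_Gam)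

lemma Gam_r_LS_measurable [measurable]: "(\<lambda>\<omega>. Gam r LS m \<omega>) \<in> borel_measurable M"
  using LS_meas by (rule borel_measurable_Gam)

lemma expectation_s_LR: "1 \<le> j \<Longrightarrow> expectation (\<lambda>\<omega>. s (LR j \<omega>)) = mu"
  unfolding mu_def using LR_meas LR_dist s01 summable_rs
  by (subst expectation_nat_valued[where p = r]) auto

lemma expectation_r_LS: "1 \<le> j \<Longrightarrow> expectation (\<lambda>\<omega>. r (LS j \<omega>)) = mu"
  unfolding mu_def using LS_meas LS_dist r01 summable_rs
  by (subst expectation_nat_valued[where p = s]) (auto simp: mult.commute)

definition label :: "bool \<times> nat \<Rightarrow> 'a \<Rightarrow> nat" where
  "label = (\<lambda>(b, j). if b then LR j else LS j)"

lemma indep_label: "indep_vars (\<lambda>_. count_space UNIV) label (UNIV \<times> {1..})"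
proof -
  let ?F = "\<lambda>i. case i of None \<Rightarrow> F0
                     | Some (True, j) \<Rightarrow> rv_sets M (LR j)
                     | Some (False, j) \<Rightarrow> rv_sets M (LS j)"
  have "indep_sets ?F (Some ` (UNIV \<times> {1..}))"
    by (rule indep_sets_mono_index[OF _ indep]) auto
  then have "indep_sets (\<lambda>i. ?F (Some i)) (UNIV \<times> {1..})"
    by (rule indep_sets_reindex) auto
  moreover have "?F (Some i) = {label i -` A \<inter> space M | A. A \<in> sets (count_space UNIV)}" for i
    by (cases i) (auto simp: label_def rv_sets_def split: bool.split)
  moreover have "\<forall>i\<in>UNIV \<times> {1..}. random_variable (count_space UNIV) (label i)"
    using LR_meas LS_meas by (auto simp: label_def)
  ultimately show ?thesis
    unfolding indep_vars_def2 by simp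
qed

lemma indep_LR: "indep_vars (\<lambda>_. count_space UNIV) LR {1..}"
proof -
  have "indep_vars (\<lambda>_. count_space UNIV) label ((\<lambda>j. (True, j)) ` {1..})"
    by (rule indep_vars_subset[OF indep_label]) auto
  from indep_vars_reindex[OF this] show ?thesis
    by (simp add: inj_on_def label_def)
qed

lemma indep_LS: "indep_vars (\<lambda>_. count_space UNIV) LS {1..}"
proof -
  have "indep_vars (\<lambda>_. count_space UNIV) label ((\<lambda>j. (False, j)) ` {1..})"
    by (rule indep_vars_subset[OF indep_label]) auto
  from indep_vars_reindex[OF this] show ?thesis
    by (simp add: inj_on_def label_def)
qed

lemma indep_s_LR: "indep_vars (\<lambda>_. borel) (\<lambda>j \<omega>. s (LR j \<omega>)) {1..}"
  using indep_LR by (rule indep_vars_compose2) simp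

lemma indep_r_LS: "indep_vars (\<lambda>_. borel) (\<lambda>j \<omega>. r (LS j \<omega>)) {1..}"
  using indep_LS by (rule indep_vars_compose2) simp

lemma indep_LR_LS: "1 \<le> j \<Longrightarrow> indep_var (count_space UNIV) (LR j) (count_space UNIV) (LS j)"
proof -
  assume "1 \<le> j"
  then have "indep_vars (\<lambda>_. count_space UNIV) label ((\<lambda>b. (b, j)) ` UNIV)"
    by (intro indep_vars_subset[OF indep_label]) auto
  from indep_vars_reindex[OF this]
  have "indep_vars (\<lambda>_. count_space UNIV) (\<lambda>b. label (b, j)) UNIV"
    by (auto simp: inj_on_def)
  moreover have "(\<lambda>b. label (b, j)) = case_bool (LR j) (LS j)"
    by (auto simp: label_def fun_eq_iff split: bool.split)
  moreover have "(\<lambda>_::bool. count_space UNIV)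
      = case_bool (count_space UNIV) (count_space UNIV :: nat measure)"
    by (auto simp: fun_eq_iff split: bool.split)
  ultimately show ?thesis
    unfolding indep_var_def by metis
qed

text \<open>The increments of \<open>\<Gamma>\<^sub>R[q] - \<Gamma>\<^sub>S[q]\<close>, shifted to start at index 0 as in
  \<open>central_limit_theorem_zero_mean\<close>.\<close>

definition incr :: "nat \<Rightarrow> 'a \<Rightarrow> real" where
  "incr i \<omega> = s (LR (Suc i) \<omega>) - r (LS (Suc i) \<omega>)"

lemma incr_measurable [measurable]: "incr i \<in> borel_measurable M"
  unfolding incr_def by measurable

lemma abs_incr_le_1: "\<bar>incr i \<omega>\<bar> \<le> 1"
  using r01[of "LS (Suc i) \<omega>"] s01[of "LR (Suc i) \<omega>"] unfolding incr_def by (simp add: abs_le_iff)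

lemma sum_incr: "(\<Sum>i<q. incr i \<omega>) = Gam s LR q \<omega> - Gam r LS q \<omega>"
  by (induction q) (auto simp: incr_def Gam_Suc)

lemma indep_incr: "indep_vars (\<lambda>_. borel) incr UNIV"
proof -
  define K where "K i = {(True, Suc i), (False, Suc i)}" for i
  define g where "g i f = s (f (True, Suc i)) - r (f (False, Suc i))" for i and f :: "bool \<times> nat \<Rightarrow> nat"
  have "indep_vars (\<lambda>i. PiM (K i) (\<lambda>_. count_space UNIV)) (\<lambda>i \<omega>. restrict (\<lambda>k. label k \<omega>) (K i)) UNIV"
    by (rule indep_vars_restrict[OF indep_label]) (auto simp: K_def disjoint_family_on_def)
  then have "indep_vars (\<lambda>_. borel) (\<lambda>i \<omega>. g i (restrict (\<lambda>k. label k \<omega>) (K i))) UNIV"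
  proof (rule indep_vars_compose2)
    fix i
    have "(\<lambda>f. f (b, Suc i)) \<in> measurable (PiM (K i) (\<lambda>_. count_space UNIV)) (count_space UNIV)" for b
      by (rule measurable_component_singleton) (simp add: K_def)
    then show "g i \<in> borel_measurable (PiM (K i) (\<lambda>_. count_space UNIV))"
      unfolding g_def by (intro borel_measurable_diff; rule measurable_compose) auto
  qed
  moreover have "g i (restrict (\<lambda>k. label k \<omega>) (K i)) = incr i \<omega>" for i \<omega>
    by (simp add: K_def g_def label_def incr_def)
  ultimately show ?thesis
    by simp
qed

lemma distr_LR: "1 \<le> j \<Longrightarrow> distr M (count_space UNIV) (LR j) = distr M (count_space UNIV) (LR 1)"
  using LR_meas LR_dist by (intro distr_eq_countable_valued) auto

lemma distr_LS: "1 \<le> j \<Longrightarrow> distr M (count_space UNIV) (LS j) = distr M (count_space UNIV) (LS 1)"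
  using LS_meas LS_dist by (intro distr_eq_countable_valued) auto

lemma distr_incr: "distr M borel (incr i) = distr M borel (incr 0)"
proof -
  define g where "g = (\<lambda>(a::nat, b::nat). s a - r b)"
  have "count_space UNIV \<Otimes>\<^sub>M count_space UNIV = (count_space UNIV :: (nat \<times> nat) measure)"
    by (simp add: pair_measure_countable)
  then have g: "g \<in> borel_measurable (count_space UNIV \<Otimes>\<^sub>M count_space UNIV)"
    by simp
  have "distr M borel (incr k) = distr (distr M (count_space UNIV) (LR 1) \<Otimes>\<^sub>M
           distr M (count_space UNIV) (LS 1)) borel g" for k
  proof -
    have pair: "(\<lambda>\<omega>. (LR (Suc k) \<omega>, LS (Suc k) \<omega>)) \<in> measurable M (count_space UNIV \<Otimes>\<^sub>M count_space UNIV)"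
      by measurable
    have "distr M borel (incr k) = distr M borel (g \<circ> (\<lambda>\<omega>. (LR (Suc k) \<omega>, LS (Suc k) \<omega>)))"
      by (simp add: g_def incr_def[abs_def] comp_def)
    also have "\<dots> = distr (distr M (count_space UNIV \<Otimes>\<^sub>M count_space UNIV)
                        (\<lambda>\<omega>. (LR (Suc k) \<omega>, LS (Suc k) \<omega>))) borel g"
      by (rule distr_distr[OF g pair, symmetric])
    also have "distr M (count_space UNIV \<Otimes>\<^sub>M count_space UNIV) (\<lambda>\<omega>. (LR (Suc k) \<omega>, LS (Suc k) \<omega>))
        = distr M (count_space UNIV) (LR (Suc k)) \<Otimes>\<^sub>M distr M (count_space UNIV) (LS (Suc k))"
      using indep_LR_LS[of "Suc k"] by (simp add: indep_var_distribution_eq)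
    finally show ?thesis
      using distr_LR[of "Suc k"] distr_LS[of "Suc k"] by simp
  qed
  then show ?thesis
    by simp
qed

lemma integrable_s_LR: "integrable M (\<lambda>\<omega>. (s (LR (Suc j) \<omega>)) ^ p)"
  using s01 by (intro integrable_const_bound[where B = 1] AE_I2) (auto simp: abs_le_iff power_le_one)

lemma integrable_r_LS: "integrable M (\<lambda>\<omega>. (r (LS (Suc j) \<omega>)) ^ p)"
  using r01 by (intro integrable_const_bound[where B = 1] AE_I2) (auto simp: abs_le_iff power_le_one)

lemma integrable_incr_power: "integrable M (\<lambda>\<omega>. (incr i \<omega>) ^ p)"
  using abs_incr_le_1 by (intro integrable_const_bound[where B = 1] AE_I2)
    (auto simp: power_abs intro!: power_le_one)

lemma expectation_incr: "expectation (incr i) = 0"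
  using integrable_s_LR[of i 1] integrable_r_LS[of i 1]
    expectation_s_LR[of "Suc i"] expectation_r_LS[of "Suc i"]
  unfolding incr_def by simp

lemma variance_incr: "variance (incr i) = variance (incr 0)"
proof -
  have "variance (incr k) = (\<integral>x. x\<^sup>2 \<partial>distr M borel (incr k))" for k
    using expectation_incr[of k] by (simp add: integral_distr)
  then show ?thesis
    using distr_incr[of i] by simp
qed

lemma variance_incr_pos: "0 < variance (incr 0)"
proof -
  have "indep_var borel (\<lambda>\<omega>. s (LR 1 \<omega>)) borel (\<lambda>\<omega>. r (LS 1 \<omega>))"
    by (rule indep_var_compose[OF indep_LR_LS, unfolded comp_def]) auto
  then have "variance (incr 0) = variance (\<lambda>\<omega>. s (LR 1 \<omega>)) + variance (\<lambda>\<omega>. r (LS 1 \<omega>))"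
    using integrable_s_LR[of 0 1] integrable_s_LR[of 0 2] integrable_r_LS[of 0 1] integrable_r_LS[of 0 2]
    unfolding incr_def One_nat_def[symmetric] by (intro variance_diff_indep) auto
  moreover have "0 \<le> variance (\<lambda>\<omega>. s (LR 1 \<omega>))" "0 \<le> variance (\<lambda>\<omega>. r (LS 1 \<omega>))"
    by (rule variance_positive)+
  moreover have "variance (\<lambda>\<omega>. s (LR 1 \<omega>)) \<noteq> 0 \<or> variance (\<lambda>\<omega>. r (LS 1 \<omega>)) \<noteq> 0"
    using sigma_pos by auto
  ultimately show ?thesis
    by linarith
qed

text \<open>By the central limit theorem \<open>(\<Gamma>\<^sub>R[q] - \<Gamma>\<^sub>S[q]) / (\<sigma> \<surd>q)\<close> is asymptotically standard
  normal, and a short interval around 0 has small Gaussian mass.\<close>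

lemma anti_concentration:
  assumes "0 < \<eta>"
  obtains \<delta> Q where "0 < \<delta>"
    and "\<And>q. Q \<le> q \<Longrightarrow> prob {\<omega> \<in> space M. \<bar>Gam s LR q \<omega> - Gam r LS q \<omega>\<bar> \<le> \<delta> * sqrt q} \<le> \<eta>"
proof -
  define \<sigma> where "\<sigma> = sqrt (variance (incr 0))"
  have "0 < \<sigma>" and \<sigma>2: "\<sigma>\<^sup>2 = variance (incr 0)"
    using variance_incr_pos by (simp_all add: \<sigma>_def)
  define Z where "Z n x = (\<Sum>i<n. incr i x) / sqrt (real n * \<sigma>\<^sup>2)" for n x
  define F where "F n = cdf (distr M borel (Z n))" for n
  define \<Phi> where "\<Phi> = cdf std_normal_distribution"
  have "weak_conv_m (\<lambda>n. distr M borel (Z n)) std_normal_distribution"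
    unfolding Z_def
  proof (rule central_limit_theorem_zero_mean[where \<mu> = "distr M borel (incr 0)"])
    show "indep_vars (\<lambda>i. borel) incr UNIV"
      by (rule indep_incr)
    show "integrable M (\<lambda>x. (incr n x)\<^sup>2)" for n
      by (rule integrable_incr_power)
    show "variance (incr n) = \<sigma>\<^sup>2" for n
      using variance_incr \<sigma>2 by simp
    show "distr M borel (incr n) = distr M borel (incr 0)" for n
      by (rule distr_incr)
  qed (simp_all add: \<open>0 < \<sigma>\<close> expectation_incr)
  then have conv: "(\<lambda>n. F n x) \<longlonglongrightarrow> \<Phi> x" for x
    using isCont_cdf_std_normal[of x] unfolding weak_conv_m_def weak_conv_def F_def \<Phi>_def by blast
  have "\<Phi> \<midarrow>0\<rightarrow> \<Phi> 0"
    using isCont_cdf_std_normal[of 0] unfolding \<Phi>_def isCont_def .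
  from LIM_D[OF this, of "\<eta>/4"] \<open>0 < \<eta>\<close> obtain d where "0 < d"
    and d: "\<And>x. x \<noteq> 0 \<Longrightarrow> norm (x - 0) < d \<Longrightarrow> norm (\<Phi> x - \<Phi> 0) < \<eta>/4"
    by auto
  define \<delta>0 where "\<delta>0 = d / 3"
  have "0 < \<delta>0"
    using \<open>0 < d\<close> by (simp add: \<delta>0_def)
  have "\<bar>\<Phi> \<delta>0 - \<Phi> 0\<bar> < \<eta>/4" "\<bar>\<Phi> (-2 * \<delta>0) - \<Phi> 0\<bar> < \<eta>/4"
    using d[of \<delta>0] d[of "-2 * \<delta>0"] \<open>0 < \<delta>0\<close> by (simp_all add: \<delta>0_def)
  then have "\<Phi> \<delta>0 - \<Phi> (-2 * \<delta>0) < \<eta>"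
    unfolding abs_less_iff by linarith
  moreover have "(\<lambda>n. F n \<delta>0 - F n (-2 * \<delta>0)) \<longlonglongrightarrow> \<Phi> \<delta>0 - \<Phi> (-2 * \<delta>0)"
    by (intro tendsto_diff conv)
  ultimately have "eventually (\<lambda>n. F n \<delta>0 - F n (-2 * \<delta>0) < \<eta>) sequentially"
    by (simp add: order_tendstoD(2))
  then obtain Q where Q: "\<And>n. Q \<le> n \<Longrightarrow> F n \<delta>0 - F n (-2 * \<delta>0) < \<eta>"
    unfolding eventually_sequentially by blast
  have [measurable]: "Z n \<in> borel_measurable M" for n
    unfolding Z_def by measurable
  have F: "F n x = prob {\<omega> \<in> space M. Z n \<omega> \<le> x}" for n x
  proof -
    have "F n x = prob (Z n -` {..x} \<inter> space M)"
      unfolding F_def cdf_def by (rule measure_distr) auto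
    also have "Z n -` {..x} \<inter> space M = {\<omega> \<in> space M. Z n \<omega> \<le> x}"
      by auto
    finally show ?thesis .
  qed
  show ?thesis
  proof (rule that[of "\<delta>0 * \<sigma>" "Q + 1"])
    show "0 < \<delta>0 * \<sigma>"
      using \<open>0 < \<delta>0\<close> \<open>0 < \<sigma>\<close> by simp
    fix q assume q: "Q + 1 \<le> q"
    have sqrt_q: "sqrt (real q * \<sigma>\<^sup>2) = \<sigma> * sqrt q" "0 < \<sigma> * sqrt q"
      using \<open>0 < \<sigma>\<close> q by (simp_all add: real_sqrt_mult mult.commute)
    have "{\<omega> \<in> space M. \<bar>Gam s LR q \<omega> - Gam r LS q \<omega>\<bar> \<le> \<delta>0 * \<sigma> * sqrt q}
        \<subseteq> {\<omega> \<in> space M. Z q \<omega> \<le> \<delta>0} - {\<omega> \<in> space M. Z q \<omega> \<le> -2 * \<delta>0}"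
    proof safe
      fix \<omega> assume "\<omega> \<in> space M" "\<bar>Gam s LR q \<omega> - Gam r LS q \<omega>\<bar> \<le> \<delta>0 * \<sigma> * sqrt q"
      have "\<bar>Z q \<omega>\<bar> = \<bar>Gam s LR q \<omega> - Gam r LS q \<omega>\<bar> / (\<sigma> * sqrt q)"
        unfolding Z_def sum_incr sqrt_q(1) using sqrt_q(2) by (simp add: abs_div)
      also have "\<dots> \<le> \<delta>0"
        using \<open>\<bar>Gam s LR q \<omega> - Gam r LS q \<omega>\<bar> \<le> \<delta>0 * \<sigma> * sqrt q\<close> sqrt_q(2)
        by (simp add: divide_le_eq mult.assoc)
      finally have "\<bar>Z q \<omega>\<bar> \<le> \<delta>0" .
      then show "Z q \<omega> \<le> \<delta>0" "Z q \<omega> \<le> -2 * \<delta>0 \<Longrightarrow> False"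
        using \<open>0 < \<delta>0\<close> by (auto simp: abs_le_iff)
    qed
    then have "prob {\<omega> \<in> space M. \<bar>Gam s LR q \<omega> - Gam r LS q \<omega>\<bar> \<le> \<delta>0 * \<sigma> * sqrt q}
        \<le> prob ({\<omega> \<in> space M. Z q \<omega> \<le> \<delta>0} - {\<omega> \<in> space M. Z q \<omega> \<le> -2 * \<delta>0})"
      by (intro finite_measure_mono) auto
    also have "\<dots> = F q \<delta>0 - F q (-2 * \<delta>0)"
      unfolding F using \<open>0 < \<delta>0\<close> by (intro finite_measure_Diff) auto
    also have "\<dots> < \<eta>"
      using Q q by simp
    finally show "prob {\<omega> \<in> space M. \<bar>Gam s LR q \<omega> - Gam r LS q \<omega>\<bar> \<le> \<delta>0 * \<sigma> * sqrt q} \<le> \<eta>"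
      by simp
  qed
qed

end

section \<open>Convergence of the tail ratio\<close>

text \<open>Windows of length about \<open>n\<^bsup>1/3\<^esup>\<close> are long enough for Hoeffding's bound to beat the
  union bound over \<open>(n + 1)\<^sup>2\<close> windows, and short enough that a bounded number of them is
  \<open>o(\<surd>n)\<close>, below the fluctuations of \<open>\<Gamma>\<^sub>R[n/2] - \<Gamma>\<^sub>S[n/2]\<close>.\<close>

definition window_len :: "nat \<Rightarrow> nat" where
  "window_len n = nat \<lfloor>real n powr (1/3)\<rfloor> + 1"

lemma window_len_bounds:
  "real n powr (1/3) \<le> real (window_len n)" "real (window_len n) \<le> real n powr (1/3) + 1"
proof -
  have "0 \<le> real n powr (1/3)"
    by simp
  then show "real n powr (1/3) \<le> real (window_len n)" "real (window_len n) \<le> real n powr (1/3) + 1"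
    unfolding window_len_def by linarith+
qed

lemma eventually_union_bound_less:
  assumes "0 < c" "0 < \<eta>"
  shows "eventually (\<lambda>n. (real n + 1)\<^sup>2 * (2 * exp (- c * real (window_len n))) < \<eta>) sequentially"
proof -
  have "(\<lambda>n::nat. (real n + 1)\<^sup>2 * (2 * exp (- c * real n powr (1/3)))) \<longlonglongrightarrow> 0"
    using \<open>0 < c\<close> by real_asymp
  from order_tendstoD(2)[OF this \<open>0 < \<eta>\<close>] show ?thesis
  proof (rule eventually_mono)
    fix n :: nat
    have "exp (- c * real (window_len n)) \<le> exp (- c * real n powr (1/3))"
      using window_len_bounds(1)[of n] \<open>0 < c\<close> by simp
    then have "(real n + 1)\<^sup>2 * (2 * exp (- c * real (window_len n)))
        \<le> (real n + 1)\<^sup>2 * (2 * exp (- c * real n powr (1/3)))"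
      by (intro mult_left_mono) auto
    then show "(real n + 1)\<^sup>2 * (2 * exp (- c * real n powr (1/3))) < \<eta> \<Longrightarrow>
        (real n + 1)\<^sup>2 * (2 * exp (- c * real (window_len n))) < \<eta>"
      by linarith
  qed
qed

lemma eventually_short_tail:
  fixes K Q :: nat
  assumes "0 < \<delta>" "0 < K"
  shows "eventually (\<lambda>n. Q \<le> (n - K * window_len n) div 2 \<and>
           real (K * window_len n) + 5 \<le> \<delta> * sqrt ((n - K * window_len n) div 2)) sequentially"
proof -
  define X where "X n = real n - K * (real n powr (1/3) + 1) - 1" for n :: nat
  have "0 < real K"
    using \<open>0 < K\<close> by simp
  then have "filterlim X at_top sequentially"
    and "filterlim (\<lambda>n. \<delta> * sqrt (X n / 2) - K * (real n powr (1/3) + 1) - 5) at_top sequentially"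
    unfolding X_def using \<open>0 < \<delta>\<close> by real_asymp+
  then have "eventually (\<lambda>n. 2 * real Q + 2 \<le> X n) sequentially"
    and "eventually (\<lambda>n. 0 \<le> \<delta> * sqrt (X n / 2) - K * (real n powr (1/3) + 1) - 5) sequentially"
    unfolding filterlim_at_top by blast+
  then show ?thesis
  proof eventually_elim
    case (elim n)
    define q where "q = (n - K * window_len n) div 2"
    have KL: "real K * real (window_len n) \<le> K * (real n powr (1/3) + 1)"
      using window_len_bounds(2)[of n] by (simp add: mult_left_mono)
    then have "real (K * window_len n) < real n"
      using elim(1) unfolding X_def by simp
    then have "n \<le> 2 * q + 1 + K * window_len n"
      unfolding q_def of_nat_less_iff by linarith
    then have "real n \<le> real (2 * q + 1 + K * window_len n)"
      by (simp only: of_nat_le_iff)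
    then have "X n \<le> 2 * real q"
      using KL unfolding X_def by simp
    then have "Q \<le> q" "sqrt (X n / 2) \<le> sqrt q"
      using elim(1) by simp_all
    then have "real K * real (window_len n) + 5 \<le> \<delta> * sqrt q"
      using elim(2) KL \<open>0 < \<delta>\<close> mult_left_mono[of "sqrt (X n / 2)" "sqrt q" \<delta>] by linarith
    with \<open>Q \<le> q\<close> show ?case
      by (simp add: q_def)
  qed
qed

definition tail_ratio :: "(nat \<Rightarrow> 'a \<Rightarrow> bool) \<Rightarrow> real \<Rightarrow> nat \<Rightarrow> 'a \<Rightarrow> real" where
  "tail_ratio C c n \<omega> =
     (if stopT C n \<omega> = n then c
      else (real (Rcnt C n \<omega>) - real (Rcnt C (stopT C n \<omega>) \<omega>)) / (real n - real (stopT C n \<omega>)))"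

locale greedy_policy = reading_model +
  fixes C :: "nat \<Rightarrow> 'a \<Rightarrow> bool"
  assumes greedy: "\<And>n \<omega>. n \<ge> 1 \<Longrightarrow> \<omega> \<in> space M \<Longrightarrow>
        (Gam r LS (Scnt C n \<omega>) \<omega> > Gam s LR (Rcnt C n \<omega>) \<omega> \<longrightarrow> C (Suc n) \<omega>) \<and>
        (Gam r LS (Scnt C n \<omega>) \<omega> < Gam s LR (Rcnt C n \<omega>) \<omega> \<longrightarrow> \<not> C (Suc n) \<omega>)"
begin

lemma greedy_balance: "\<omega> \<in> space M \<Longrightarrow> \<bar>Gam r LS (Scnt C k \<omega>) \<omega> - Gam s LR (Rcnt C k \<omega>) \<omega>\<bar> \<le> 1"
  by (rule greedy_balance_bound[OF r01 s01 greedy])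

lemma tail_ratio_deviation_subset:
  fixes K l0 n :: nat
  assumes "0 < \<epsilon>" "4 < mu * \<epsilon> * K" "1 \<le> l0"
    and short: "real (K * l0) + 5 \<le> \<delta> * sqrt ((n - K * l0) div 2)"
  shows "{\<omega> \<in> space M. \<epsilon> < \<bar>tail_ratio C c n \<omega> - 1/2\<bar>}
      \<subseteq> {\<omega> \<in> space M. \<not> windows_close s LR mu (mu * \<epsilon>) l0 n \<omega>}
        \<union> {\<omega> \<in> space M. \<not> windows_close r LS mu (mu * \<epsilon>) l0 n \<omega>}
        \<union> {\<omega> \<in> space M. \<bar>Gam s LR ((n - K * l0) div 2) \<omega> - Gam r LS ((n - K * l0) div 2) \<omega>\<bar>
                           \<le> \<delta> * sqrt ((n - K * l0) div 2)}"
    (is "_ \<subseteq> ?E\<^sub>R \<union> ?E\<^sub>S \<union> ?E")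
proof
  fix \<omega> assume \<omega>: "\<omega> \<in> {\<omega> \<in> space M. \<epsilon> < \<bar>tail_ratio C c n \<omega> - 1/2\<bar>}"
  define T where "T = stopT C n \<omega>"
  define k where "k = n - K * l0"
  have "K * l0 < n"
  proof (rule ccontr)
    assume "\<not> K * l0 < n"
    then have "real (K * l0) + 5 \<le> 0"
      using short by simp
    then show False
      by (simp del: of_nat_mult)
  qed
  then have "real n - real k = real (K * l0)" "1 \<le> n"
    by (simp_all add: k_def of_nat_diff)
  consider "k \<le> T" | "T < k"
    by linarith
  then show "\<omega> \<in> ?E\<^sub>R \<union> ?E\<^sub>S \<union> ?E"
  proof cases
    case 1
    then have "\<bar>Gam s LR (k div 2) \<omega> - Gam r LS (k div 2) \<omega>\<bar> \<le> real n - real k + 5"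
      using \<omega> \<open>1 \<le> n\<close> unfolding T_def by (intro imbalance_le_before_stopT[OF r01 s01 greedy_balance]) auto
    then show ?thesis
      using \<omega> short \<open>real n - real k = real (K * l0)\<close> by (simp add: k_def)
  next
    case 2
    have "\<omega> \<in> ?E\<^sub>R \<union> ?E\<^sub>S" if close: "\<omega> \<notin> ?E\<^sub>R" "\<omega> \<notin> ?E\<^sub>S"
    proof -
      have "\<bar>(real (Rcnt C n \<omega>) - real (Rcnt C T \<omega>)) / (real n - real T) - 1/2\<bar> < \<epsilon>"
        using close \<omega> 2 assms(1-3) mu_pos mu_le_1 \<open>real n - real k = real (K * l0)\<close>
        by (intro ratio_deviation_less[OF r01 s01 _ _ _ greedy_balance]) auto
      moreover have "T \<noteq> n"
        using 2 by (simp add: k_def)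
      ultimately show ?thesis
        using \<omega> by (simp add: tail_ratio_def T_def)
    qed
    then show ?thesis
      by blast
  qed
qed

lemma eventually_prob_tail_ratio_deviation_less:
  assumes "0 < \<epsilon>" "0 < e"
  shows "eventually (\<lambda>n. prob {\<omega> \<in> space M. \<epsilon> < \<bar>tail_ratio C c n \<omega> - 1/2\<bar>} < e) sequentially"
proof -
  define \<eta> where "\<eta> = e / 4"
  have "0 < \<eta>"
    using \<open>0 < e\<close> by (simp add: \<eta>_def)
  obtain \<delta> Q where "0 < \<delta>" and anti:
    "\<And>q. Q \<le> q \<Longrightarrow> prob {\<omega> \<in> space M. \<bar>Gam s LR q \<omega> - Gam r LS q \<omega>\<bar> \<le> \<delta> * sqrt q} \<le> \<eta>"
    using anti_concentration[OF \<open>0 < \<eta>\<close>] by blast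
  define K :: nat where "K = nat \<lceil>4 / (mu * \<epsilon>)\<rceil> + 1"
  have "0 < mu * \<epsilon>"
    using mu_pos \<open>0 < \<epsilon>\<close> by simp
  moreover have "4 / (mu * \<epsilon>) < real K"
    unfolding K_def by linarith
  ultimately have "4 < mu * \<epsilon> * K"
    by (simp add: pos_divide_less_eq mult.commute)
  have "eventually (\<lambda>n. (real n + 1)\<^sup>2 * (2 * exp (- (2 * (mu * \<epsilon>)\<^sup>2) * real (window_len n))) < \<eta>)
          sequentially"
    using \<open>0 < mu * \<epsilon>\<close> \<open>0 < \<eta>\<close> by (intro eventually_union_bound_less) auto
  moreover have "eventually (\<lambda>n. Q \<le> (n - K * window_len n) div 2 \<and>
      real (K * window_len n) + 5 \<le> \<delta> * sqrt ((n - K * window_len n) div 2)) sequentially"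
    by (rule eventually_short_tail[OF \<open>0 < \<delta>\<close>]) (simp add: K_def)
  ultimately show ?thesis
  proof eventually_elim
    case (elim n)
    define l0 where "l0 = window_len n"
    define q where "q = (n - K * l0) div 2"
    let ?E\<^sub>R = "{\<omega> \<in> space M. \<not> windows_close s LR mu (mu * \<epsilon>) l0 n \<omega>}"
    let ?E\<^sub>S = "{\<omega> \<in> space M. \<not> windows_close r LS mu (mu * \<epsilon>) l0 n \<omega>}"
    let ?E = "{\<omega> \<in> space M. \<bar>Gam s LR q \<omega> - Gam r LS q \<omega>\<bar> \<le> \<delta> * sqrt q}"
    have "1 \<le> l0"
      by (simp add: l0_def window_len_def)
    have sets: "?E\<^sub>R \<in> sets M" "?E\<^sub>S \<in> sets M" "?E \<in> sets M"
      using LR_meas LS_meas by (auto intro: sets_not_windows_close)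
    have "(real n + 1)\<^sup>2 * (2 * exp (- 2 * (mu * \<epsilon>)\<^sup>2 * l0)) < \<eta>"
      using elim(1) by (simp add: l0_def)
    moreover have "prob ?E\<^sub>R \<le> (real n + 1)\<^sup>2 * (2 * exp (- 2 * (mu * \<epsilon>)\<^sup>2 * l0))"
      using \<open>1 \<le> l0\<close> \<open>0 < mu * \<epsilon>\<close>
      by (intro prob_not_windows_close_le[OF LR_meas indep_s_LR expectation_s_LR s01]) auto
    moreover have "prob ?E\<^sub>S \<le> (real n + 1)\<^sup>2 * (2 * exp (- 2 * (mu * \<epsilon>)\<^sup>2 * l0))"
      using \<open>1 \<le> l0\<close> \<open>0 < mu * \<epsilon>\<close>
      by (intro prob_not_windows_close_le[OF LS_meas indep_r_LS expectation_r_LS r01]) auto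
    moreover have "prob ?E \<le> \<eta>"
      using anti elim(2) by (simp add: q_def l0_def)
    moreover have "prob {\<omega> \<in> space M. \<epsilon> < \<bar>tail_ratio C c n \<omega> - 1/2\<bar>} \<le> prob (?E\<^sub>R \<union> ?E\<^sub>S \<union> ?E)"
      using sets \<open>0 < \<epsilon>\<close> \<open>4 < mu * \<epsilon> * K\<close> \<open>1 \<le> l0\<close> elim(2) unfolding q_def l0_def
      by (intro finite_measure_mono tail_ratio_deviation_subset) auto
    moreover have "prob (?E\<^sub>R \<union> ?E\<^sub>S \<union> ?E) \<le> prob ?E\<^sub>R + prob ?E\<^sub>S + prob ?E"
      using sets by (meson add_right_mono measure_Un_le order_trans sets.Un)
    ultimately show ?case
      using \<open>0 < e\<close> unfolding \<eta>_def by linarith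
  qed
qed

lemma prob_tail_ratio_deviation_tendsto_0:
  assumes "0 < \<epsilon>"
  shows "(\<lambda>n. prob {\<omega> \<in> space M. \<epsilon> < \<bar>tail_ratio C c n \<omega> - 1/2\<bar>}) \<longlonglongrightarrow> 0"
proof (rule order_tendstoI)
  show "eventually (\<lambda>n. prob {\<omega> \<in> space M. \<epsilon> < \<bar>tail_ratio C c n \<omega> - 1/2\<bar>} < e) sequentially"
    if "0 < e" for e
    using assms that by (rule eventually_prob_tail_ratio_deviation_less)
qed (intro always_eventually allI, simp add: less_le_trans[OF _ measure_nonneg])

end

theorem lemma4p2:
  fixes M :: "'a measure" and r s :: "nat \<Rightarrow> real"
    and LR LS :: "nat \<Rightarrow> 'a \<Rightarrow> nat" and F0 :: "'a set set"
    and C :: "nat \<Rightarrow> 'a \<Rightarrow> bool" and c :: real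
  assumes P: "prob_space M"
    and r_nonneg: "\<And>i. r i \<ge> 0" and r0: "r 0 = 0" and r_sum: "r sums 1"
    and s_nonneg: "\<And>i. s i \<ge> 0" and s0: "s 0 = 0" and s_sum: "s sums 1"
    and mu_pos: "(\<Sum>i. r i * s i) > 0"
    and LR_meas: "\<And>j. j \<ge> 1 \<Longrightarrow> LR j \<in> measurable M (count_space UNIV)"
    and LS_meas: "\<And>j. j \<ge> 1 \<Longrightarrow> LS j \<in> measurable M (count_space UNIV)"
    and LR_dist: "\<And>j i. j \<ge> 1 \<Longrightarrow> measure M {\<omega> \<in> space M. LR j \<omega> = i} = r i"
    and LS_dist: "\<And>j i. j \<ge> 1 \<Longrightarrow> measure M {\<omega> \<in> space M. LS j \<omega> = i} = s i"
    and F0_alg: "sigma_algebra (space M) F0" and F0_sub: "F0 \<subseteq> sets M"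
    and indep: "prob_space.indep_sets M
        (\<lambda>i. case i of None \<Rightarrow> F0
                     | Some (True, j) \<Rightarrow> rv_sets M (LR j)
                     | Some (False, j) \<Rightarrow> rv_sets M (LS j))
        ({None} \<union> Some ` (UNIV \<times> {1..}))"
    and sigma_pos: "sqrt (prob_space.variance M (\<lambda>\<omega>. s (LR 1 \<omega>)))
                    + sqrt (prob_space.variance M (\<lambda>\<omega>. r (LS 1 \<omega>))) > 0"
    and adapted: "\<And>n. {\<omega> \<in> space M. C (Suc n) \<omega>} \<in> filt M F0 LR LS C n"
    and greedy: "\<And>n \<omega>. n \<ge> 1 \<Longrightarrow> \<omega> \<in> space M \<Longrightarrow>
        (Gam r LS (Scnt C n \<omega>) \<omega> > Gam s LR (Rcnt C n \<omega>) \<omega> \<longrightarrow> C (Suc n) \<omega>) \<and>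
        (Gam r LS (Scnt C n \<omega>) \<omega> < Gam s LR (Rcnt C n \<omega>) \<omega> \<longrightarrow> \<not> C (Suc n) \<omega>)"
  shows "\<forall>\<epsilon>>0. (\<lambda>n. measure M {\<omega> \<in> space M.
            \<bar>(if stopT C n \<omega> = n then c
              else (real (Rcnt C n \<omega>) - real (Rcnt C (stopT C n \<omega>) \<omega>))
                   / (real n - real (stopT C n \<omega>))) - 1/2\<bar> > \<epsilon>}) \<longlonglongrightarrow> 0"
proof -
  interpret greedy_policy M r s LR LS F0 C
    unfolding greedy_policy_def greedy_policy_axioms_def reading_model_def reading_model_axioms_def
    using P r_nonneg r_sum s_nonneg s_sum mu_pos LR_meas LS_meas LR_dist LS_dist indep sigma_pos greedy
    by simp
  show ?thesis
    using prob_tail_ratio_deviation_tendsto_0 unfolding tail_ratio_def by blast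
qed

end
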